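(* If $F$ is a bounded below semi-free DG $B$-module with semi-basis $G$, then $F\cong N$ for some appropriate choices of $R$-module homomorphisms $\xi_i$, $\tau_i$, $\alpha_i$, and $\delta_i$ satisfying, for all integers $i$ and $j$, $\xi_i=-\alpha_i$, $\tau_i=t$, $\alpha_{i-1}\alpha_i=-t\delta_i$, $\delta_i\alpha_{i+1}=\alpha_{i-1}\delta_{i+1}$, $\delta_{i+j}(\gamma_{i,s} m_j)=\gamma_{i,s} \delta_j(m_j)$, and $\alpha_{i+j}(\gamma_{i,s} m_j)=\partial_i^A(\gamma_{i,s})m_j+(-1)^i\gamma_{i,s}\alpha_j(m_j)$ for $s=1,\ldots,r_i$ and all $m_j\in M_j$, where $\beta_i=|G\cap F_i|$.
   Context: Let $R$ be a commutative noetherian ring. Let $A$ be a (commutative, positively graded) DG $R$-algebra such that each $A_i$ is free over $R$ of finite rank, with fixed basis $\{\gamma_{i,1},\ldots,\gamma_{i,r_i}\}$ of $A_i$. Let $t\in R$ and $B=K^R(t)\otimes_R A$, where $K^R(t)$ is the Koszul complex on $t$; identify $B_i$ with $A_{i-1}\oplus A_i$ (column vectors), so that $\partial^B_i=\left[\begin{smallmatrix}-\partial^A_{i-1} & 0\\ t & \partial^A_i\end{smallmatrix}\right]$. For cardinals $\beta_i$ ($\beta_i=0$ for $i\ll0$) set $M_i=\bigoplus_{j\ge0}A_j^{(\beta_{i-j})}$. Given $R$-linear maps $\xi_i\colon M_i\to M_{i-1}$, $\tau_i\colon M_i\to M_i$, $\delta_i\colon M_i\to M_{i-2}$, $\alpha_i\colon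 M_i\to M_{i-1}$, let $N$ be the sequence with $N_i=M_{i-1}\oplus M_i$ and $\partial^N_i=\left[\begin{smallmatrix}\xi_{i-1}&\delta_i\\ \tau_{i-1}&\alpha_i\end{smallmatrix}\right]$, with $B$ acting by $\left[\begin{smallmatrix}a_{i-1}\\ a_i\end{smallmatrix}\right]\left[\begin{smallmatrix}m_{j-1}\\ m_j\end{smallmatrix}\right]=\left[\begin{smallmatrix}a_{i-1}m_j+(-1)^ia_im_{j-1}\\ a_im_j\end{smallmatrix}\right]$. *)

theory Defs
  imports Main "HOL.Modules" "HOL-Library.Function_Algebras" "HOL-Library.Product_Plus"
begin

text \<open>All graded objects are represented by families of homogeneous
components (indexed by int) sitting inside an ambient abelian group carrying an
R-module structure (HOL locale module).\<close>

definition alt :: "int \<Rightarrow> 'x::ab_group_add \<Rightarrow> 'x" where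
  "alt i x = (if even i then x else - x)"

definition noetherian_ring_type :: "'r::comm_ring_1 itself \<Rightarrow> bool" where
  "noetherian_ring_type _ \<longleftrightarrow>
     (\<forall>I::'r set. (0 \<in> I \<and> (\<forall>x\<in>I. \<forall>y\<in>I. x + y \<in> I) \<and> (\<forall>c. \<forall>x\<in>I. c * x \<in> I))
        \<longrightarrow> (\<exists>S. finite S \<and> S \<subseteq> I \<and> I = {\<Sum>s\<in>S. c s * s | c. True}))"

definition graded_module ::
  "('r::comm_ring_1 \<Rightarrow> 'x::ab_group_add \<Rightarrow> 'x) \<Rightarrow> (int \<Rightarrow> 'x set) \<Rightarrow> bool" where
  "graded_module sc C \<longleftrightarrow> module sc \<and> (\<forall>i. module.subspace sc (C i))
      \<and> (\<forall>i j. i \<noteq> j \<longrightarrow> C i \<inter> C j \<subseteq> {0})"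

definition lin_on ::
  "('r \<Rightarrow> 'x::ab_group_add \<Rightarrow> 'x) \<Rightarrow> 'x set \<Rightarrow> ('r \<Rightarrow> 'y::ab_group_add \<Rightarrow> 'y) \<Rightarrow> 'y set
    \<Rightarrow> ('x \<Rightarrow> 'y) \<Rightarrow> bool" where
  "lin_on sx X sy Y f \<longleftrightarrow> (\<forall>x\<in>X. f x \<in> Y) \<and> (\<forall>x\<in>X. \<forall>y\<in>X. f (x + y) = f x + f y)
      \<and> (\<forall>c. \<forall>x\<in>X. f (sx c x) = sy c (f x))"

definition dg_algebra ::
  "('r::comm_ring_1 \<Rightarrow> 'a::ab_group_add \<Rightarrow> 'a) \<Rightarrow> (int \<Rightarrow> 'a set) \<Rightarrow> ('a \<Rightarrow> 'a \<Rightarrow> 'a)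
     \<Rightarrow> 'a \<Rightarrow> ('a \<Rightarrow> 'a) \<Rightarrow> bool" where
  "dg_algebra sc A mul one d \<longleftrightarrow>
     graded_module sc A \<and> (\<forall>i<0. A i = {0}) \<and> one \<in> A 0
     \<and> (\<forall>i j. \<forall>x\<in>A i. \<forall>y\<in>A j. mul x y \<in> A (i + j))
     \<and> (\<forall>i j. \<forall>x\<in>A i. \<forall>x'\<in>A i. \<forall>y\<in>A j. mul (x + x') y = mul x y + mul x' y)
     \<and> (\<forall>i j. \<forall>x\<in>A i. \<forall>y\<in>A j. \<forall>y'\<in>A j. mul x (y + y') = mul x y + mul x y')
     \<and> (\<forall>i j c. \<forall>x\<in>A i. \<forall>y\<in>A j. mul (sc c x) y = sc c (mul x y) \<and> mul x (sc c y) = sc c (mul x y))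
     \<and> (\<forall>i j k. \<forall>x\<in>A i. \<forall>y\<in>A j. \<forall>z\<in>A k. mul (mul x y) z = mul x (mul y z))
     \<and> (\<forall>i. \<forall>x\<in>A i. mul one x = x \<and> mul x one = x)
     \<and> (\<forall>i j. \<forall>x\<in>A i. \<forall>y\<in>A j. mul x y = alt (i * j) (mul y x))
     \<and> (\<forall>i. odd i \<longrightarrow> (\<forall>x\<in>A i. mul x x = 0))
     \<and> (\<forall>i. lin_on sc (A i) sc (A (i - 1)) d)
     \<and> (\<forall>i. \<forall>x\<in>A i. d (d x) = 0)
     \<and> (\<forall>i j. \<forall>x\<in>A i. \<forall>y\<in>A j. d (mul x y) = mul (d x) y + alt i (mul x (d y)))"

definition fixed_free_bases ::
  "('r::comm_ring_1 \<Rightarrow> 'a::ab_group_add \<Rightarrow> 'a) \<Rightarrow> (int \<Rightarrow> 'a set) \<Rightarrow> (int \<Rightarrow> nat)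
     \<Rightarrow> (int \<Rightarrow> nat \<Rightarrow> 'a) \<Rightarrow> bool" where
  "fixed_free_bases sc A r gam \<longleftrightarrow>
     (\<forall>i. inj_on (gam i) {..<r i} \<and> module.independent sc (gam i ` {..<r i})
          \<and> module.span sc (gam i ` {..<r i}) = A i)"

text \<open>B = K^R(t) tensor A, with B_i = A_(i-1) (+) A_i as pairs.\<close>
definition Bc :: "(int \<Rightarrow> 'a set) \<Rightarrow> int \<Rightarrow> ('a \<times> 'a) set" where
  "Bc A i = A (i - 1) \<times> A i"

definition bscale :: "('r \<Rightarrow> 'a \<Rightarrow> 'a) \<Rightarrow> 'r \<Rightarrow> 'a \<times> 'a \<Rightarrow> 'a \<times> 'a" where
  "bscale sc c b = (sc c (fst b), sc c (snd b))"

text \<open>product of b in B_i with b' (e^2 = 0, e deg 1).\<close>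
definition bmul :: "('a::ab_group_add \<Rightarrow> 'a \<Rightarrow> 'a) \<Rightarrow> int \<Rightarrow> 'a \<times> 'a \<Rightarrow> 'a \<times> 'a \<Rightarrow> 'a \<times> 'a" where
  "bmul mul i b b' = (mul (fst b) (snd b') + alt i (mul (snd b) (fst b')), mul (snd b) (snd b'))"

definition bdiff :: "('r \<Rightarrow> 'a::ab_group_add \<Rightarrow> 'a) \<Rightarrow> ('a \<Rightarrow> 'a) \<Rightarrow> 'r \<Rightarrow> 'a \<times> 'a \<Rightarrow> 'a \<times> 'a" where
  "bdiff sc d t b = (- d (fst b), sc t (fst b) + d (snd b))"

definition dg_B_module ::
  "('r::comm_ring_1 \<Rightarrow> 'a::ab_group_add \<Rightarrow> 'a) \<Rightarrow> (int \<Rightarrow> 'a set) \<Rightarrow> ('a \<Rightarrow> 'a \<Rightarrow> 'a)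
     \<Rightarrow> 'a \<Rightarrow> ('a \<Rightarrow> 'a) \<Rightarrow> 'r
     \<Rightarrow> ('r \<Rightarrow> 'f::ab_group_add \<Rightarrow> 'f) \<Rightarrow> (int \<Rightarrow> 'f set) \<Rightarrow> ('f \<Rightarrow> 'f) \<Rightarrow> ('a \<times> 'a \<Rightarrow> 'f \<Rightarrow> 'f)
     \<Rightarrow> bool" where
  "dg_B_module sA A mul one dA t sF F dF act \<longleftrightarrow>
     graded_module sF F
     \<and> (\<forall>i j. \<forall>b\<in>Bc A i. \<forall>m\<in>F j. act b m \<in> F (i + j))
     \<and> (\<forall>i j. \<forall>b\<in>Bc A i. \<forall>b'\<in>Bc A i. \<forall>m\<in>F j. act (b + b') m = act b m + act b' m)
     \<and> (\<forall>i j. \<forall>b\<in>Bc A i. \<forall>m\<in>F j. \<forall>m'\<in>F j. act b (m + m') = act b m + act b m')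
     \<and> (\<forall>i j c. \<forall>b\<in>Bc A i. \<forall>m\<in>F j.
           act (bscale sA c b) m = sF c (act b m) \<and> act b (sF c m) = sF c (act b m))
     \<and> (\<forall>j. \<forall>m\<in>F j. act (0, one) m = m)
     \<and> (\<forall>i j k. \<forall>b\<in>Bc A i. \<forall>b'\<in>Bc A j. \<forall>m\<in>F k. act (bmul mul i b b') m = act b (act b' m))
     \<and> (\<forall>i. lin_on sF (F i) sF (F (i - 1)) dF)
     \<and> (\<forall>i. \<forall>m\<in>F i. dF (dF m) = 0)
     \<and> (\<forall>i j. \<forall>b\<in>Bc A i. \<forall>m\<in>F j.
           dF (act b m) = act (bdiff sA dA t b) m + alt i (act b (dF m)))"

definition bounded_below :: "(int \<Rightarrow> 'f::zero set) \<Rightarrow> bool" where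
  "bounded_below F \<longleftrightarrow> (\<exists>n. \<forall>i<n. F i = {0})"

definition semi_basis ::
  "(int \<Rightarrow> 'a::ab_group_add set) \<Rightarrow> (int \<Rightarrow> 'f::ab_group_add set) \<Rightarrow> ('a \<times> 'a \<Rightarrow> 'f \<Rightarrow> 'f)
     \<Rightarrow> 'f set \<Rightarrow> bool" where
  "semi_basis A F act G \<longleftrightarrow>
     (\<forall>g\<in>G. \<exists>k. g \<in> F k)
     \<and> (\<forall>n. \<forall>x\<in>F n. \<exists>c. finite {g\<in>G. c g \<noteq> 0} \<and> (\<forall>k. \<forall>g\<in>G \<inter> F k. c g \<in> Bc A (n - k))
            \<and> x = (\<Sum>g\<in>{g\<in>G. c g \<noteq> 0}. act (c g) g))
     \<and> (\<forall>n c. finite {g\<in>G. c g \<noteq> 0} \<and> (\<forall>k. \<forall>g\<in>G \<inter> F k. c g \<in> Bc A (n - k))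
            \<and> (\<Sum>g\<in>{g\<in>G. c g \<noteq> 0}. act (c g) g) = 0 \<longrightarrow> (\<forall>g\<in>G. c g = 0))"

text \<open>M_i = (+)_j A_j^(G \<inter> F_(i-j)), elements are finitely supported functions on G.\<close>
definition Mset :: "(int \<Rightarrow> 'a::zero set) \<Rightarrow> (int \<Rightarrow> 'f set) \<Rightarrow> 'f set \<Rightarrow> int \<Rightarrow> ('f \<Rightarrow> 'a) set" where
  "Mset A F G i = {m. finite {g. m g \<noteq> 0} \<and> (\<forall>g. m g \<noteq> 0 \<longrightarrow> g \<in> G)
                      \<and> (\<forall>k. \<forall>g\<in>G \<inter> F k. m g \<in> A (i - k))}"

definition mscale :: "('r \<Rightarrow> 'a \<Rightarrow> 'a) \<Rightarrow> 'r \<Rightarrow> ('f \<Rightarrow> 'a) \<Rightarrow> ('f \<Rightarrow> 'a)" where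
  "mscale sc c m = (\<lambda>g. sc c (m g))"

definition amul :: "('a \<Rightarrow> 'a \<Rightarrow> 'a) \<Rightarrow> 'a \<Rightarrow> ('f \<Rightarrow> 'a) \<Rightarrow> ('f \<Rightarrow> 'a)" where
  "amul mul a m = (\<lambda>g. mul a (m g))"

definition Nset :: "(int \<Rightarrow> 'a::zero set) \<Rightarrow> (int \<Rightarrow> 'f set) \<Rightarrow> 'f set \<Rightarrow> int
     \<Rightarrow> (('f \<Rightarrow> 'a) \<times> ('f \<Rightarrow> 'a)) set" where
  "Nset A F G i = Mset A F G (i - 1) \<times> Mset A F G i"

definition nscale :: "('r \<Rightarrow> 'a \<Rightarrow> 'a) \<Rightarrow> 'r \<Rightarrow> ('f \<Rightarrow> 'a) \<times> ('f \<Rightarrow> 'a) \<Rightarrow> ('f \<Rightarrow> 'a) \<times> ('f \<Rightarrow> 'a)" where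
  "nscale sc c n = (mscale sc c (fst n), mscale sc c (snd n))"

definition ndiff :: "(int \<Rightarrow> 'm \<Rightarrow> 'm::plus) \<Rightarrow> (int \<Rightarrow> 'm \<Rightarrow> 'm) \<Rightarrow> (int \<Rightarrow> 'm \<Rightarrow> 'm)
     \<Rightarrow> (int \<Rightarrow> 'm \<Rightarrow> 'm) \<Rightarrow> int \<Rightarrow> 'm \<times> 'm \<Rightarrow> 'm \<times> 'm" where
  "ndiff xi tau delta alpha i n =
     (xi (i - 1) (fst n) + delta i (snd n), tau (i - 1) (fst n) + alpha i (snd n))"

definition nact :: "('a::ab_group_add \<Rightarrow> 'a \<Rightarrow> 'a) \<Rightarrow> int \<Rightarrow> 'a \<times> 'a
     \<Rightarrow> ('f \<Rightarrow> 'a) \<times> ('f \<Rightarrow> 'a) \<Rightarrow> ('f \<Rightarrow> 'a) \<times> ('f \<Rightarrow> 'a)" where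
  "nact mul i b n = (amul mul (fst b) (snd n) + alt i (amul mul (snd b) (fst n)),
                     amul mul (snd b) (snd n))"

end

theory Submission
  imports Defs
begin

text \<open>Expanding in the semi-basis identifies \<open>N\<close> with \<open>F\<close>: a pair \<open>(u, v)\<close> of
families of coefficients in \<open>A\<close> is sent to \<open>\<Sum>\<^sub>g (u g, v g) \<cdot> g\<close>, and the
semi-basis axioms say exactly that this is a bijection; it is B-linear because the action is
associative. Transport the differential of \<open>F\<close> along it. Since \<open>(u, v) = e \<cdot> (0, u) + (0, v)\<close>
with \<open>e = (1, 0) \<in> B\<^sub>1\<close>, the Leibniz rule reduces the differential to its values on
elements \<open>(0, m)\<close>; the two components of these define \<open>\<delta>\<close> and \<open>\<alpha>\<close>, and
the Leibniz rule for \<open>e\<close> forces \<open>\<xi> = -\<alpha>\<close> and \<open>\<tau> = t\<close>. The relations between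
\<open>\<alpha>\<close> and \<open>\<delta>\<close> are the two components of \<open>\<partial>\<^sup>2 = 0\<close>, and the formulas for
\<open>\<gamma>\<cdot>m\<close> come from the Leibniz rule for elements \<open>(0, a)\<close> of \<open>B\<close>.\<close>

lemma alt_alt [simp]: "alt i (alt i x) = x"
  by (simp add: alt_def)

lemma alt_zero [simp]: "alt i 0 = 0"
  by (simp add: alt_def)

lemma alt_1 [simp]: "alt 1 x = - x"
  by (simp add: alt_def)

lemma alt_Pair: "alt i (a, b) = (alt i a, alt i b)"
  by (simp add: alt_def)

lemma alt_apply: "alt i f x = alt i (f x)"
  by (simp add: alt_def)

lemma Pair_eq_0_iff: "(a, b) = 0 \<longleftrightarrow> a = 0 \<and> b = 0"
  by (simp add: zero_prod_def)

lemma Bc_iff: "b \<in> Bc A i \<longleftrightarrow> fst b \<in> A (i - 1) \<and> snd b \<in> A i"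
  by (cases b) (simp add: Bc_def)

lemma Nset_iff: "p \<in> Nset A F G i \<longleftrightarrow> fst p \<in> Mset A F G (i - 1) \<and> snd p \<in> Mset A F G i"
  by (cases p) (simp add: Nset_def)

lemma fixed_free_bases_in: "fixed_free_bases sc A r gam \<Longrightarrow> module sc \<Longrightarrow> s < r i \<Longrightarrow> gam i s \<in> A i"
  unfolding fixed_free_bases_def by (metis lessThan_iff image_eqI module.span_base)

locale semifree_dg_module =
  fixes sA :: "'r::comm_ring_1 \<Rightarrow> 'a::ab_group_add \<Rightarrow> 'a"
    and A :: "int \<Rightarrow> 'a set" and mul :: "'a \<Rightarrow> 'a \<Rightarrow> 'a" and one :: 'a and dA :: "'a \<Rightarrow> 'a"
    and t :: 'r
    and sF :: "'r \<Rightarrow> 'f::ab_group_add \<Rightarrow> 'f" and F :: "int \<Rightarrow> 'f set" and dF :: "'f \<Rightarrow> 'f"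
    and act :: "'a \<times> 'a \<Rightarrow> 'f \<Rightarrow> 'f" and G :: "'f set"
  assumes algebra: "dg_algebra sA A mul one dA"
    and B_module: "dg_B_module sA A mul one dA t sF F dF act"
    and basis: "semi_basis A F act G"
begin

abbreviation M where "M \<equiv> Mset A F G"
abbreviation N where "N \<equiv> Nset A F G"

lemma module_A: "module sA"
  using algebra by (simp add: dg_algebra_def graded_module_def)

lemma subspace_A: "module.subspace sA (A i)"
  using algebra by (simp add: dg_algebra_def graded_module_def)

lemma module_F: "module sF"
  using B_module by (simp add: dg_B_module_def graded_module_def)

lemma subspace_F: "module.subspace sF (F i)"
  using B_module by (simp add: dg_B_module_def graded_module_def)

interpretation mA: module sA by (rule module_A)
interpretation mF: module sF by (rule module_F)

lemma mscale_0 [simp]: "mscale sA c 0 = 0"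
  by (simp add: mscale_def fun_eq_iff)

lemma mscale_uminus: "mscale sA c (- m) = - mscale sA c m"
  by (simp add: mscale_def fun_eq_iff)

lemma zero_in_A [simp]: "0 \<in> A i"
  using subspace_A mA.subspace_0 by blast

lemma A_add: "x \<in> A i \<Longrightarrow> y \<in> A i \<Longrightarrow> x + y \<in> A i"
  using subspace_A mA.subspace_add by blast

lemma A_uminus: "x \<in> A i \<Longrightarrow> - x \<in> A i"
  using subspace_A mA.subspace_neg by blast

lemma A_scale: "x \<in> A i \<Longrightarrow> sA c x \<in> A i"
  using subspace_A mA.subspace_scale by blast

lemma zero_in_F [simp]: "0 \<in> F i"
  using subspace_F mF.subspace_0 by blast

lemma F_add: "x \<in> F i \<Longrightarrow> y \<in> F i \<Longrightarrow> x + y \<in> F i"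
  using subspace_F mF.subspace_add by blast

lemma F_uminus: "x \<in> F i \<Longrightarrow> - x \<in> F i"
  using subspace_F mF.subspace_neg by blast

lemma F_alt: "x \<in> F i \<Longrightarrow> alt k x \<in> F i"
  by (simp add: alt_def F_uminus)

lemma F_sum: "(\<And>x. x \<in> S \<Longrightarrow> f x \<in> F i) \<Longrightarrow> sum f S \<in> F i"
  using subspace_F mF.subspace_sum by blast

lemma A_trivial_below_0: "i < 0 \<Longrightarrow> A i = {0}"
  using algebra unfolding dg_algebra_def by metis

lemma one_in_A: "one \<in> A 0"
  using algebra unfolding dg_algebra_def by metis

lemma mul_in_A: "x \<in> A i \<Longrightarrow> y \<in> A j \<Longrightarrow> mul x y \<in> A (i + j)"
  using algebra unfolding dg_algebra_def by metis

lemma mul_add_right: "x \<in> A i \<Longrightarrow> y \<in> A j \<Longrightarrow> y' \<in> A j \<Longrightarrow> mul x (y + y') = mul x y + mul x y'"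
  using algebra unfolding dg_algebra_def by metis

lemma mul_add_left: "x \<in> A i \<Longrightarrow> x' \<in> A i \<Longrightarrow> y \<in> A j \<Longrightarrow> mul (x + x') y = mul x y + mul x' y"
  using algebra unfolding dg_algebra_def by metis

lemma mul_scale_left: "x \<in> A i \<Longrightarrow> y \<in> A j \<Longrightarrow> mul (sA c x) y = sA c (mul x y)"
  using algebra unfolding dg_algebra_def by metis

lemma mul_one_left: "x \<in> A i \<Longrightarrow> mul one x = x"
  using algebra unfolding dg_algebra_def by metis

lemma mul_zero_right [simp]: "x \<in> A i \<Longrightarrow> mul x 0 = 0"
  using mul_add_right[of x i 0 0 0] by simp

lemma mul_zero_left [simp]: "y \<in> A j \<Longrightarrow> mul 0 y = 0"
  using mul_add_left[of 0 0 0 y j] by simp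

lemma dA_in_A: "x \<in> A i \<Longrightarrow> dA x \<in> A (i - 1)"
  using algebra unfolding dg_algebra_def lin_on_def by blast

lemma dA_zero [simp]: "dA 0 = 0"
proof -
  have "dA (0 + 0) = dA 0 + dA 0"
    using algebra zero_in_A unfolding dg_algebra_def lin_on_def by metis
  then show ?thesis by simp
qed

lemma dA_one [simp]: "dA one = 0"
  using dA_in_A[OF one_in_A] A_trivial_below_0[of "0 - 1"] by simp

lemma act_in_F: "b \<in> Bc A i \<Longrightarrow> m \<in> F j \<Longrightarrow> act b m \<in> F (i + j)"
  using B_module by (simp add: dg_B_module_def)

lemma act_add_left: "b \<in> Bc A i \<Longrightarrow> b' \<in> Bc A i \<Longrightarrow> m \<in> F j \<Longrightarrow> act (b + b') m = act b m + act b' m"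
  using B_module by (simp add: dg_B_module_def)

lemma act_add_right: "b \<in> Bc A i \<Longrightarrow> m \<in> F j \<Longrightarrow> m' \<in> F j \<Longrightarrow> act b (m + m') = act b m + act b m'"
  using B_module by (simp add: dg_B_module_def)

lemma act_scale_left: "b \<in> Bc A i \<Longrightarrow> m \<in> F j \<Longrightarrow> act (bscale sA c b) m = sF c (act b m)"
  using B_module by (simp add: dg_B_module_def)

lemma act_bmul: "b \<in> Bc A i \<Longrightarrow> b' \<in> Bc A j \<Longrightarrow> m \<in> F k \<Longrightarrow> act (bmul mul i b b') m = act b (act b' m)"
  using B_module by (simp add: dg_B_module_def)

lemma act_zero_left: "m \<in> F j \<Longrightarrow> act 0 m = 0"
  using act_add_left[of 0 0 0 m j] by (simp add: Bc_iff)

lemma act_zero_right: "b \<in> Bc A i \<Longrightarrow> act b 0 = 0"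
  using act_add_right[of b i 0 0 0] by simp

lemma act_sum:
  assumes "b \<in> Bc A i" "finite S" "\<And>g. g \<in> S \<Longrightarrow> x g \<in> F j"
  shows "act b (\<Sum>g\<in>S. x g) = (\<Sum>g\<in>S. act b (x g))"
  using assms(2,3)
proof (induction S rule: finite_induct)
  case empty
  then show ?case by (simp add: act_zero_right[OF assms(1)])
next
  case (insert a S)
  then show ?case
    using act_add_right[OF assms(1), of "x a" j "sum x S"] F_sum[of S x j] by simp
qed

lemma dF_in_F: "x \<in> F i \<Longrightarrow> dF x \<in> F (i - 1)"
  using B_module unfolding dg_B_module_def lin_on_def by blast

lemma dF_add: "x \<in> F i \<Longrightarrow> y \<in> F i \<Longrightarrow> dF (x + y) = dF x + dF y"
  using B_module unfolding dg_B_module_def lin_on_def by blast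

lemma dF_scale: "x \<in> F i \<Longrightarrow> dF (sF c x) = sF c (dF x)"
  using B_module unfolding dg_B_module_def lin_on_def by blast

lemma dF_dF: "x \<in> F i \<Longrightarrow> dF (dF x) = 0"
  using B_module by (simp add: dg_B_module_def)

lemma dF_act: "b \<in> Bc A i \<Longrightarrow> m \<in> F j \<Longrightarrow> dF (act b m) = act (bdiff sA dA t b) m + alt i (act b (dF m))"
  using B_module by (simp add: dg_B_module_def)

lemma semi_basis_graded: "g \<in> G \<Longrightarrow> \<exists>k. g \<in> F k"
  using basis by (simp add: semi_basis_def)

lemma M_iff: "m \<in> M i \<longleftrightarrow> finite {g. m g \<noteq> 0} \<and> (\<forall>g. m g \<noteq> 0 \<longrightarrow> g \<in> G)
    \<and> (\<forall>k. \<forall>g\<in>G \<inter> F k. m g \<in> A (i - k))"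
  by (simp add: Mset_def)

lemma M_outside_G: "m \<in> M i \<Longrightarrow> g \<notin> G \<Longrightarrow> m g = 0"
  by (auto simp: M_iff)

lemma M_degree: "m \<in> M i \<Longrightarrow> g \<in> G \<Longrightarrow> g \<in> F k \<Longrightarrow> m g \<in> A (i - k)"
  by (auto simp: M_iff)

lemma M_homogeneous: "m \<in> M i \<Longrightarrow> \<exists>d. m g \<in> A d"
  by (cases "g \<in> G") (use semi_basis_graded M_degree M_outside_G zero_in_A in metis)+

lemma zero_in_M [simp]: "0 \<in> M i"
  by (simp add: M_iff)

lemma M_add: "m \<in> M i \<Longrightarrow> m' \<in> M i \<Longrightarrow> m + m' \<in> M i"
proof -
  assume m: "m \<in> M i" "m' \<in> M i"
  have "{g. (m + m') g \<noteq> 0} \<subseteq> {g. m g \<noteq> 0} \<union> {g. m' g \<noteq> 0}" by auto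
  with m show ?thesis
    unfolding M_iff by (auto intro: finite_subset A_add)
qed

lemma M_uminus: "m \<in> M i \<Longrightarrow> - m \<in> M i"
  by (simp add: M_iff A_uminus)

lemma M_alt: "m \<in> M i \<Longrightarrow> alt k m \<in> M i"
  by (simp add: alt_def M_uminus)

lemma M_mscale: "m \<in> M i \<Longrightarrow> mscale sA c m \<in> M i"
proof -
  assume m: "m \<in> M i"
  have "{g. mscale sA c m g \<noteq> 0} \<subseteq> {g. m g \<noteq> 0}" by (auto simp: mscale_def)
  with m show ?thesis
    unfolding M_iff by (auto intro: finite_subset A_scale simp: mscale_def)
qed

lemma M_amul: "a \<in> A i \<Longrightarrow> m \<in> M j \<Longrightarrow> amul mul a m \<in> M (i + j)"
proof -
  assume a: "a \<in> A i" and m: "m \<in> M j"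
  have "{g. amul mul a m g \<noteq> 0} \<subseteq> {g. m g \<noteq> 0}" using a by (auto simp: amul_def)
  moreover have "mul a (m g) \<in> A (i + j - k)" if "g \<in> G \<inter> F k" for g k
    using mul_in_A[OF a M_degree[OF m]] that by (simp add: add_diff_eq)
  ultimately show ?thesis
    using m unfolding M_iff by (auto intro: finite_subset simp: amul_def)
qed

lemma amul_one: "m \<in> M i \<Longrightarrow> amul mul one m = m"
  by (auto simp: amul_def fun_eq_iff dest: M_homogeneous intro: mul_one_left)

lemma amul_scale_one:
  assumes m: "m \<in> M i"
  shows "amul mul (sA c one) m = mscale sA c m"
proof -
  have "mul (sA c one) (m g) = sA c (m g)" for g
  proof -
    obtain d where "m g \<in> A d" using M_homogeneous[OF m] by blast
    then show ?thesis by (simp add: mul_scale_left[OF one_in_A] mul_one_left)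
  qed
  then show ?thesis by (simp add: amul_def mscale_def fun_eq_iff)
qed

lemma amul_zero_left [simp]:
  assumes m: "m \<in> M i"
  shows "amul mul 0 m = 0"
proof -
  have "mul 0 (m g) = 0" for g
    using M_homogeneous[OF m, of g] by auto
  then show ?thesis by (simp add: amul_def fun_eq_iff)
qed

lemma amul_zero_right [simp]: "a \<in> A i \<Longrightarrow> amul mul a 0 = 0"
  by (simp add: amul_def fun_eq_iff)

lemma zero_in_N [simp]: "0 \<in> N i"
  by (simp add: Nset_iff)

lemma N_add: "p \<in> N i \<Longrightarrow> q \<in> N i \<Longrightarrow> p + q \<in> N i"
  by (simp add: Nset_iff M_add)

lemma N_uminus: "p \<in> N i \<Longrightarrow> - p \<in> N i"
  by (simp add: Nset_iff M_uminus)

lemma N_diff: "p \<in> N i \<Longrightarrow> q \<in> N i \<Longrightarrow> p - q \<in> N i"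
  using N_add N_uminus by (metis diff_conv_add_uminus)

lemma N_nscale: "p \<in> N i \<Longrightarrow> nscale sA c p \<in> N i"
  by (simp add: Nset_iff M_mscale nscale_def)

lemma N_nact: "b \<in> Bc A i \<Longrightarrow> p \<in> N j \<Longrightarrow> nact mul i b p \<in> N (i + j)"
  unfolding Bc_iff Nset_iff nact_def
  by (metis M_add M_alt M_amul add.commute add_diff_eq diff_add_eq fst_conv snd_conv)

subsection \<open>Expansion in the semi-basis\<close>

definition coeff :: "('f \<Rightarrow> 'a) \<times> ('f \<Rightarrow> 'a) \<Rightarrow> 'f \<Rightarrow> 'a \<times> 'a" where
  "coeff p g = (fst p g, snd p g)"

definition coeff_support :: "('f \<Rightarrow> 'a) \<times> ('f \<Rightarrow> 'a) \<Rightarrow> 'f set" where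
  "coeff_support p = {g\<in>G. coeff p g \<noteq> 0}"

definition expand :: "('f \<Rightarrow> 'a) \<times> ('f \<Rightarrow> 'a) \<Rightarrow> 'f" where
  "expand p = (\<Sum>g\<in>coeff_support p. act (coeff p g) g)"

lemma coeff_in_Bc: "p \<in> N n \<Longrightarrow> g \<in> G \<Longrightarrow> g \<in> F k \<Longrightarrow> coeff p g \<in> Bc A (n - k)"
  by (auto simp: Nset_iff Bc_iff coeff_def diff_diff_eq add.commute dest: M_degree)

lemma finite_coeff_support: "p \<in> N n \<Longrightarrow> finite (coeff_support p)"
  by (rule finite_subset[of _ "{g. fst p g \<noteq> 0} \<union> {g. snd p g \<noteq> 0}"])
    (auto simp: coeff_support_def coeff_def Pair_eq_0_iff Nset_iff M_iff)

lemma coeff_support_subset: "coeff_support p \<subseteq> G"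
  by (auto simp: coeff_support_def)

lemma act_coeff_in_F: "p \<in> N n \<Longrightarrow> g \<in> G \<Longrightarrow> act (coeff p g) g \<in> F n"
  using semi_basis_graded act_in_F coeff_in_Bc by fastforce

lemma expand_eq_sum:
  assumes "finite S" "coeff_support p \<subseteq> S" "S \<subseteq> G"
  shows "expand p = (\<Sum>g\<in>S. act (coeff p g) g)"
  unfolding expand_def
proof (rule sum.mono_neutral_left[OF assms(1,2)], intro ballI)
  fix g assume "g \<in> S - coeff_support p"
  with assms(3) show "act (coeff p g) g = 0"
    using semi_basis_graded act_zero_left by (fastforce simp: coeff_support_def)
qed

lemma expand_in_F: "p \<in> N n \<Longrightarrow> expand p \<in> F n"
  unfolding expand_def by (rule F_sum) (auto intro: act_coeff_in_F simp: coeff_support_def)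

lemma coeff_add: "coeff (p + q) g = coeff p g + coeff q g"
  by (simp add: coeff_def)

lemma coeff_nscale: "coeff (nscale sA c p) g = bscale sA c (coeff p g)"
  by (simp add: coeff_def nscale_def mscale_def bscale_def)

lemma coeff_nact: "coeff (nact mul i b p) g = bmul mul i b (coeff p g)"
  by (simp add: coeff_def nact_def bmul_def amul_def alt_apply)

lemma expand_add:
  assumes p: "p \<in> N n" and q: "q \<in> N n"
  shows "expand (p + q) = expand p + expand q"
proof -
  define S where "S = coeff_support p \<union> coeff_support q \<union> coeff_support (p + q)"
  have S: "finite S" "S \<subseteq> G"
    using finite_coeff_support[OF p] finite_coeff_support[OF q] finite_coeff_support[OF N_add[OF p q]]
      coeff_support_subset
    by (auto simp: S_def)
  have expand_S: "expand r = (\<Sum>g\<in>S. act (coeff r g) g)" if "r \<in> {p, q, p + q}" for r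
    by (rule expand_eq_sum[OF S(1) _ S(2)]) (use that in \<open>auto simp: S_def\<close>)
  have "act (coeff (p + q) g) g = act (coeff p g) g + act (coeff q g) g" if g: "g \<in> S" for g
  proof -
    obtain k where k: "g \<in> F k" using semi_basis_graded g S(2) by blast
    show ?thesis
      unfolding coeff_add using g S(2) by (blast intro: act_add_left coeff_in_Bc p q k)
  qed
  then show ?thesis
    by (simp add: expand_S sum.distrib)
qed

lemma expand_nscale:
  assumes p: "p \<in> N n"
  shows "expand (nscale sA c p) = sF c (expand p)"
proof -
  have "coeff_support (nscale sA c p) \<subseteq> coeff_support p"
    by (auto simp: coeff_support_def nscale_def mscale_def coeff_def Pair_eq_0_iff)
  then have "expand (nscale sA c p) = (\<Sum>g\<in>coeff_support p. act (coeff (nscale sA c p) g) g)"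
    by (rule expand_eq_sum[OF finite_coeff_support[OF p] _ coeff_support_subset])
  also have "\<dots> = (\<Sum>g\<in>coeff_support p. sF c (act (coeff p g) g))"
  proof (rule sum.cong[OF refl])
    fix g assume g: "g \<in> coeff_support p"
    then obtain k where k: "g \<in> F k" using semi_basis_graded coeff_support_subset by blast
    show "act (coeff (nscale sA c p) g) g = sF c (act (coeff p g) g)"
      unfolding coeff_nscale using g coeff_support_subset by (blast intro: act_scale_left coeff_in_Bc p k)
  qed
  finally show ?thesis
    by (simp add: expand_def mF.scale_sum_right)
qed

lemma act_expand:
  assumes b: "b \<in> Bc A i" and p: "p \<in> N j"
  shows "act b (expand p) = expand (nact mul i b p)"
proof -
  have "coeff_support (nact mul i b p) \<subseteq> coeff_support p"
    using b by (auto simp: coeff_support_def coeff_def Pair_eq_0_iff nact_def amul_def alt_apply Bc_iff)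
  then have "expand (nact mul i b p) = (\<Sum>g\<in>coeff_support p. act (coeff (nact mul i b p) g) g)"
    by (rule expand_eq_sum[OF finite_coeff_support[OF p] _ coeff_support_subset])
  also have "\<dots> = (\<Sum>g\<in>coeff_support p. act b (act (coeff p g) g))"
  proof (rule sum.cong[OF refl])
    fix g assume g: "g \<in> coeff_support p"
    then obtain k where k: "g \<in> F k" using semi_basis_graded coeff_support_subset by blast
    show "act (coeff (nact mul i b p) g) g = act b (act (coeff p g) g)"
      unfolding coeff_nact using g coeff_support_subset by (blast intro: act_bmul b coeff_in_Bc p k)
  qed
  also have "\<dots> = act b (expand p)"
    unfolding expand_def
    by (rule act_sum[OF b finite_coeff_support[OF p], symmetric])
      (auto intro: act_coeff_in_F[OF p] simp: coeff_support_def)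
  finally show ?thesis ..
qed

lemma expand_eq_0_imp:
  assumes p: "p \<in> N n" and "expand p = 0"
  shows "p = 0"
proof -
  have "\<forall>g\<in>G. coeff p g = 0"
    using basis finite_coeff_support[OF p] coeff_in_Bc[OF p] assms(2)
    unfolding semi_basis_def expand_def coeff_support_def by blast
  with p show ?thesis
    by (auto simp: prod_eq_iff fun_eq_iff coeff_def Pair_eq_0_iff Nset_iff dest: M_outside_G)
qed

lemma inj_on_expand: "inj_on expand (N n)"
proof (rule inj_onI)
  fix p q assume p: "p \<in> N n" and q: "q \<in> N n" and "expand p = expand q"
  then have "expand (p - q) = 0"
    using expand_add[OF N_diff[OF p q] q] by simp
  then show "p = q"
    using expand_eq_0_imp[OF N_diff[OF p q]] by simp
qed

lemma expand_surj:
  assumes x: "x \<in> F n"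
  shows "\<exists>p\<in>N n. expand p = x"
proof -
  obtain c where fin: "finite {g\<in>G. c g \<noteq> 0}" and deg: "\<forall>k. \<forall>g\<in>G \<inter> F k. c g \<in> Bc A (n - k)"
    and x_eq: "x = (\<Sum>g\<in>{g\<in>G. c g \<noteq> 0}. act (c g) g)"
    using basis x unfolding semi_basis_def by blast
  define p where "p = ((\<lambda>g. if g \<in> G then fst (c g) else 0), (\<lambda>g. if g \<in> G then snd (c g) else 0))"
  have coeff_p: "coeff p g = (if g \<in> G then c g else 0)" for g
    by (simp add: p_def coeff_def zero_prod_def)
  have "finite {g. fst p g \<noteq> 0}" "finite {g. snd p g \<noteq> 0}"
    by (auto simp: p_def intro: finite_subset[OF _ fin])
  then have "p \<in> N n"
    using deg by (auto simp: Nset_iff M_iff p_def Bc_iff diff_diff_eq add.commute)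
  moreover have "coeff_support p = {g\<in>G. c g \<noteq> 0}"
    by (auto simp: coeff_support_def coeff_p)
  then have "expand p = x"
    unfolding expand_def x_eq by (auto intro!: sum.cong simp: coeff_p)
  ultimately show ?thesis by blast
qed

lemma bij_betw_expand: "bij_betw expand (N n) (F n)"
  unfolding bij_betw_def using inj_on_expand expand_in_F expand_surj by blast

definition coords :: "int \<Rightarrow> 'f \<Rightarrow> ('f \<Rightarrow> 'a) \<times> ('f \<Rightarrow> 'a)" where
  "coords n = inv_into (N n) expand"

lemma bij_betw_coords: "bij_betw (coords n) (F n) (N n)"
  unfolding coords_def by (rule bij_betw_inv_into[OF bij_betw_expand])

lemma coords_in_N: "x \<in> F n \<Longrightarrow> coords n x \<in> N n"
  using bij_betw_coords bij_betwE by blast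

lemma expand_coords: "x \<in> F n \<Longrightarrow> expand (coords n x) = x"
  unfolding coords_def using bij_betw_expand by (metis bij_betw_inv_into_right)

lemma coords_expand: "p \<in> N n \<Longrightarrow> coords n (expand p) = p"
  unfolding coords_def using bij_betw_expand by (metis bij_betw_inv_into_left)

lemma coords_eqI: "p \<in> N n \<Longrightarrow> expand p = x \<Longrightarrow> coords n x = p"
  using coords_expand by blast

lemma coords_add: "x \<in> F n \<Longrightarrow> y \<in> F n \<Longrightarrow> coords n (x + y) = coords n x + coords n y"
  by (rule coords_eqI) (simp_all add: N_add coords_in_N expand_add[OF coords_in_N coords_in_N] expand_coords)

lemma coords_zero [simp]: "coords n 0 = 0"
  by (rule coords_eqI[OF zero_in_N]) (simp add: expand_def coeff_support_def coeff_def zero_prod_def)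

lemma coords_uminus: "x \<in> F n \<Longrightarrow> coords n (- x) = - coords n x"
  using coords_add[of x n "- x"] F_uminus by (metis add.right_inverse add.inverse_unique coords_zero)

lemma coords_alt: "x \<in> F n \<Longrightarrow> coords n (alt k x) = alt k (coords n x)"
  by (simp add: alt_def coords_uminus)

lemma coords_scale: "x \<in> F n \<Longrightarrow> coords n (sF c x) = nscale sA c (coords n x)"
  by (rule coords_eqI) (simp_all add: N_nscale coords_in_N expand_nscale[OF coords_in_N] expand_coords)

lemma lin_on_coords: "lin_on sF (F n) (nscale sA) (N n) (coords n)"
  by (simp add: lin_on_def coords_in_N coords_add coords_scale)

lemma coords_act: "b \<in> Bc A i \<Longrightarrow> x \<in> F j \<Longrightarrow> coords (i + j) (act b x) = nact mul i b (coords j x)"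
  by (rule coords_eqI) (simp_all add: N_nact coords_in_N act_expand[OF _ coords_in_N, symmetric] expand_coords)

subsection \<open>The transported differential\<close>

definition diff_coords :: "int \<Rightarrow> ('f \<Rightarrow> 'a) \<Rightarrow> ('f \<Rightarrow> 'a) \<times> ('f \<Rightarrow> 'a)" where
  "diff_coords i m = coords (i - 1) (dF (expand (0, m)))"

definition delta_map :: "int \<Rightarrow> ('f \<Rightarrow> 'a) \<Rightarrow> 'f \<Rightarrow> 'a" where
  "delta_map i m = fst (diff_coords i m)"

definition alpha_map :: "int \<Rightarrow> ('f \<Rightarrow> 'a) \<Rightarrow> 'f \<Rightarrow> 'a" where
  "alpha_map i m = snd (diff_coords i m)"

lemma coords_dF_expand: "coords (i - 1) (dF (expand (0, m))) = (delta_map i m, alpha_map i m)"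
  by (simp add: delta_map_def alpha_map_def diff_coords_def)

lemma expand_0_in_F: "m \<in> M i \<Longrightarrow> expand (0, m) \<in> F i"
  by (rule expand_in_F) (simp add: Nset_iff)

lemma delta_alpha_in_M:
  assumes "m \<in> M i"
  shows "delta_map i m \<in> M (i - 2)" "alpha_map i m \<in> M (i - 1)"
  using coords_in_N[OF dF_in_F[OF expand_0_in_F[OF assms]]]
  unfolding delta_map_def alpha_map_def diff_coords_def by (simp_all add: Nset_iff diff_diff_eq)

lemma diff_coords_add:
  assumes m: "m \<in> M i" and m': "m' \<in> M i"
  shows "diff_coords i (m + m') = diff_coords i m + diff_coords i m'"
proof -
  have "expand (0, m + m') = expand (0, m) + expand (0, m')"
    using expand_add[of "(0, m)" i "(0, m')"] m m' by (simp add: Nset_iff)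
  then show ?thesis
    using expand_0_in_F[OF m] expand_0_in_F[OF m']
    by (simp add: diff_coords_def dF_add coords_add dF_in_F)
qed

lemma diff_coords_mscale:
  assumes m: "m \<in> M i"
  shows "diff_coords i (mscale sA c m) = nscale sA c (diff_coords i m)"
proof -
  have "expand (0, mscale sA c m) = sF c (expand (0, m))"
    using expand_nscale[of "(0, m)" i c] m by (simp add: Nset_iff nscale_def)
  then show ?thesis
    using expand_0_in_F[OF m] by (simp add: diff_coords_def dF_scale coords_scale dF_in_F)
qed

lemma lin_on_delta: "lin_on (mscale sA) (M i) (mscale sA) (M (i - 2)) (delta_map i)"
  using delta_alpha_in_M(1) by (auto simp: lin_on_def delta_map_def diff_coords_add diff_coords_mscale nscale_def)

lemma lin_on_alpha: "lin_on (mscale sA) (M i) (mscale sA) (M (i - 1)) (alpha_map i)"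
  using delta_alpha_in_M(2) by (auto simp: lin_on_def alpha_map_def diff_coords_add diff_coords_mscale nscale_def)

lemma lin_on_neg_alpha: "lin_on (mscale sA) (M i) (mscale sA) (M (i - 1)) (\<lambda>m. - alpha_map i m)"
  using lin_on_alpha[of i] by (auto simp: lin_on_def M_uminus mscale_uminus)

lemma lin_on_mscale: "lin_on (mscale sA) (M i) (mscale sA) (M i) (mscale sA c)"
  using M_mscale by (auto simp: lin_on_def mscale_def fun_eq_iff mA.scale_right_distrib mult.commute)

text \<open>Every \<open>x \<in> F\<^sub>i\<close> with coordinates \<open>(u, v)\<close> is \<open>e \<cdot> expand (0, u) + expand (0, v)\<close>,
  where \<open>e = (1, 0)\<close> has \<open>\<partial>\<^sup>B e = t\<close>.\<close>

lemma coords_dF: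
  assumes x: "x \<in> F i"
  shows "coords (i - 1) (dF x) = ndiff (\<lambda>i m. - alpha_map i m) (\<lambda>i. mscale sA t) delta_map alpha_map i (coords i x)"
proof -
  obtain u v where uv: "coords i x = (u, v)" by (cases "coords i x")
  have u: "u \<in> M (i - 1)" and v: "v \<in> M i" using coords_in_N[OF x] uv by (auto simp: Nset_iff)
  define e where "e = (one, 0::'a)"
  have e: "e \<in> Bc A 1" by (simp add: e_def Bc_iff one_in_A)
  define y where "y = expand (0, u)"
  define z where "z = expand (0, v)"
  have y: "y \<in> F (i - 1)" and z: "z \<in> F i"
    unfolding y_def z_def using expand_0_in_F u v by blast+
  have u0: "(0, u) \<in> N (i - 1)" using u by (simp add: Nset_iff)
  have coords_y: "coords (i - 1) y = (0, u)" unfolding y_def by (rule coords_expand[OF u0])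
  have "act e y = expand (u, 0)"
    using act_expand[OF e u0] u by (simp add: y_def nact_def e_def amul_one)
  moreover have "x = expand (u, 0) + z"
    using expand_coords[OF x] expand_add[of "(u, 0)" i "(0, v)"] u v uv by (simp add: Nset_iff z_def)
  ultimately have "dF x = dF (act e y) + dF z"
    using dF_add act_in_F[OF e y] z by simp
  also have "dF (act e y) = act (0, sA t one) y - act e (dF y)"
    using dF_act[OF e y] by (simp add: bdiff_def e_def)
  finally have dF_x: "dF x = act (0, sA t one) y + - act e (dF y) + dF z" by simp
  have t1: "(0, sA t one) \<in> Bc A 0" by (simp add: Bc_iff A_scale one_in_A)
  have dy: "dF y \<in> F (i - 1 - 1)" by (rule dF_in_F[OF y])
  have F1: "act (0, sA t one) y \<in> F (i - 1)" and F2: "act e (dF y) \<in> F (i - 1)"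
    using act_in_F[OF t1 y] act_in_F[OF e dy] by simp_all
  have "coords (i - 1) (dF x)
      = coords (i - 1) (act (0, sA t one) y + - act e (dF y)) + coords (i - 1) (dF z)"
    unfolding dF_x by (rule coords_add[OF F_add[OF F1 F_uminus[OF F2]] dF_in_F[OF z]])
  also have "coords (i - 1) (act (0, sA t one) y + - act e (dF y))
      = coords (i - 1) (act (0, sA t one) y) - coords (i - 1) (act e (dF y))"
    using coords_add[OF F1 F_uminus[OF F2]] coords_uminus[OF F2] by simp
  also have "coords (i - 1) (act (0, sA t one) y) = (0, mscale sA t u)"
    using coords_act[OF t1 y] coords_y u by (simp add: nact_def amul_scale_one A_scale one_in_A)
  also have "coords (i - 1) (act e (dF y)) = (alpha_map (i - 1) u, 0)"
  proof -
    have "coords (i - 1 - 1) (dF y) = (delta_map (i - 1) u, alpha_map (i - 1) u)"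
      unfolding y_def by (rule coords_dF_expand)
    then show ?thesis
      using coords_act[OF e dy] delta_alpha_in_M[OF u] by (simp add: nact_def e_def amul_one)
  qed
  also have "coords (i - 1) (dF z) = (delta_map i v, alpha_map i v)"
    unfolding z_def by (rule coords_dF_expand)
  finally show ?thesis
    by (simp add: uv ndiff_def zero_fun_def)
qed

lemma delta_alpha_relations:
  assumes m: "m \<in> M i"
  shows "alpha_map (i - 1) (alpha_map i m) = - mscale sA t (delta_map i m)"
    and "delta_map (i - 1) (alpha_map i m) = alpha_map (i - 2) (delta_map i m)"
proof -
  define w where "w = dF (expand (0, m))"
  have w: "w \<in> F (i - 1)" unfolding w_def by (rule dF_in_F[OF expand_0_in_F[OF m]])
  have "0 = coords (i - 1 - 1) (dF w)"
    using dF_dF[OF expand_0_in_F[OF m]] by (simp add: w_def)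
  also have "\<dots> = ndiff (\<lambda>i m. - alpha_map i m) (\<lambda>i. mscale sA t) delta_map alpha_map (i - 1)
      (delta_map i m, alpha_map i m)"
    using coords_dF[OF w] by (simp add: w_def coords_dF_expand)
  finally have "0 = - alpha_map (i - 2) (delta_map i m) + delta_map (i - 1) (alpha_map i m)"
    and "0 = mscale sA t (delta_map i m) + alpha_map (i - 1) (alpha_map i m)"
    by (simp_all add: ndiff_def zero_prod_def diff_diff_eq)
  then show "alpha_map (i - 1) (alpha_map i m) = - mscale sA t (delta_map i m)"
    and "delta_map (i - 1) (alpha_map i m) = alpha_map (i - 2) (delta_map i m)"
    by (metis add.commute add.inverse_unique, metis add.inverse_unique minus_minus)
qed

lemma delta_alpha_amul:
  assumes a: "a \<in> A i" and m: "m \<in> M j"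
  shows "delta_map (i + j) (amul mul a m) = amul mul a (delta_map j m)"
    and "alpha_map (i + j) (amul mul a m) = amul mul (dA a) m + alt i (amul mul a (alpha_map j m))"
proof -
  define b where "b = (0::'a, a)"
  have b: "b \<in> Bc A i" and b': "(0, dA a) \<in> Bc A (i - 1)"
    using a dA_in_A[OF a] by (simp_all add: b_def Bc_iff)
  define y where "y = expand (0, m)"
  have y: "y \<in> F j" unfolding y_def by (rule expand_0_in_F[OF m])
  have m0: "(0, m) \<in> N j" using m by (simp add: Nset_iff)
  have dy: "dF y \<in> F (j - 1)" by (rule dF_in_F[OF y])
  have "act b y = expand (0, amul mul a m)"
    using act_expand[OF b m0] a m by (simp add: y_def nact_def b_def)
  then have "diff_coords (i + j) (amul mul a m) = coords (i + j - 1) (dF (act b y))"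
    by (simp add: diff_coords_def)
  also have "dF (act b y) = act (0, dA a) y + alt i (act b (dF y))"
    using dF_act[OF b y] by (simp add: bdiff_def b_def)
  also have "coords (i + j - 1) \<dots> = (0, amul mul (dA a) m)
      + alt i (alt i (amul mul a (delta_map j m)), amul mul a (alpha_map j m))"
  proof -
    have F1: "act (0, dA a) y \<in> F (i + j - 1)" and F2: "act b (dF y) \<in> F (i + j - 1)"
      using act_in_F[OF b' y] act_in_F[OF b dy] by (simp_all add: algebra_simps)
    have "coords (i + j - 1) (act (0, dA a) y) = (0, amul mul (dA a) m)"
      using coords_act[OF b' y] coords_expand[OF m0] m dA_in_A[OF a]
      by (simp add: y_def nact_def algebra_simps)
    moreover have "coords (i + j - 1) (act b (dF y)) = (alt i (amul mul a (delta_map j m)), amul mul a (alpha_map j m))"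
      using coords_act[OF b dy] delta_alpha_in_M[OF m]
      by (simp add: y_def coords_dF_expand nact_def b_def algebra_simps)
    ultimately show ?thesis
      using coords_add[OF F1 F_alt[OF F2]] coords_alt[OF F2] by simp
  qed
  finally show "delta_map (i + j) (amul mul a m) = amul mul a (delta_map j m)"
    and "alpha_map (i + j) (amul mul a m) = amul mul (dA a) m + alt i (amul mul a (alpha_map j m))"
    by (simp_all add: delta_map_def alpha_map_def alt_Pair)
qed

end

theorem lemma2p8:
  fixes sA :: "'r::comm_ring_1 \<Rightarrow> 'a::ab_group_add \<Rightarrow> 'a"
    and A :: "int \<Rightarrow> 'a set" and mul :: "'a \<Rightarrow> 'a \<Rightarrow> 'a" and one :: 'a and dA :: "'a \<Rightarrow> 'a"
    and r :: "int \<Rightarrow> nat" and gam :: "int \<Rightarrow> nat \<Rightarrow> 'a" and t :: 'r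
    and sF :: "'r \<Rightarrow> 'f::ab_group_add \<Rightarrow> 'f" and F :: "int \<Rightarrow> 'f set" and dF :: "'f \<Rightarrow> 'f"
    and act :: "'a \<times> 'a \<Rightarrow> 'f \<Rightarrow> 'f" and G :: "'f set"
  assumes "noetherian_ring_type TYPE('r)"
    and "dg_algebra sA A mul one dA"
    and "fixed_free_bases sA A r gam"
    and "dg_B_module sA A mul one dA t sF F dF act"
    and "bounded_below F"
    and "semi_basis A F act G"
  shows "\<exists>xi tau delta alpha \<phi>.
     (\<forall>i. lin_on (mscale sA) (Mset A F G i) (mscale sA) (Mset A F G (i - 1)) (xi i))
   \<and> (\<forall>i. lin_on (mscale sA) (Mset A F G i) (mscale sA) (Mset A F G i) (tau i))
   \<and> (\<forall>i. lin_on (mscale sA) (Mset A F G i) (mscale sA) (Mset A F G (i - 2)) (delta i))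
   \<and> (\<forall>i. lin_on (mscale sA) (Mset A F G i) (mscale sA) (Mset A F G (i - 1)) (alpha i))
   \<and> (\<forall>i. \<forall>m\<in>Mset A F G i. xi i m = - alpha i m)
   \<and> (\<forall>i. \<forall>m\<in>Mset A F G i. tau i m = mscale sA t m)
   \<and> (\<forall>i. \<forall>m\<in>Mset A F G i. alpha (i - 1) (alpha i m) = - mscale sA t (delta i m))
   \<and> (\<forall>i. \<forall>m\<in>Mset A F G (i + 1). delta i (alpha (i + 1) m) = alpha (i - 1) (delta (i + 1) m))
   \<and> (\<forall>i j. \<forall>s<r i. \<forall>m\<in>Mset A F G j.
        delta (i + j) (amul mul (gam i s) m) = amul mul (gam i s) (delta j m))
   \<and> (\<forall>i j. \<forall>s<r i. \<forall>m\<in>Mset A F G j.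
        alpha (i + j) (amul mul (gam i s) m)
          = amul mul (dA (gam i s)) m + alt i (amul mul (gam i s) (alpha j m)))
   \<and> (\<forall>i. bij_betw (\<phi> i) (F i) (Nset A F G i))
   \<and> (\<forall>i. lin_on sF (F i) (nscale sA) (Nset A F G i) (\<phi> i))
   \<and> (\<forall>i. \<forall>x\<in>F i. \<phi> (i - 1) (dF x) = ndiff xi tau delta alpha i (\<phi> i x))
   \<and> (\<forall>i j. \<forall>b\<in>Bc A i. \<forall>x\<in>F j. \<phi> (i + j) (act b x) = nact mul i b (\<phi> j x))"
proof -
  interpret semifree_dg_module sA A mul one dA t sF F dF act G
    using assms(2,4,6) by unfold_locales
  have gam: "gam i s \<in> A i" if "s < r i" for i s
    using fixed_free_bases_in[OF assms(3) module_A that] .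
  have delta_alpha_shift: "delta_map i (alpha_map (i + 1) m) = alpha_map (i - 1) (delta_map (i + 1) m)"
    if "m \<in> M (i + 1)" for i m
    using delta_alpha_relations(2)[OF that] by simp
  show ?thesis
    by (intro exI[of _ "\<lambda>i m. - alpha_map i m"] exI[of _ "\<lambda>i. mscale sA t"]
        exI[of _ delta_map] exI[of _ alpha_map] exI[of _ coords] conjI allI ballI impI)
      (assumption | rule refl lin_on_neg_alpha lin_on_mscale lin_on_delta lin_on_alpha
        delta_alpha_relations(1) delta_alpha_shift delta_alpha_amul[OF gam] bij_betw_coords
        lin_on_coords coords_dF coords_act)+
qed

end
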